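(* For every $n\in\mathbb{N}$, \begin{align*} \sum_{j=0}^{n}\sum_{i=0}^{j}\frac{\binom{n+1}{i}}{\binom{n}{j}}(-1)^j&=\frac{n+1}{2n+4}\left(1+(-1)^n\big(2^{n+2}-1\big)\right),\\ \sum_{j=0}^{n}\sum_{i=0}^{j}\frac{\binom{2n+1}{i}}{\binom{2n}{j}}(-1)^j&=\frac{(-1)^n\,2^{2n-1}}{\binom{2n}{n}}+\frac{2n+1}{n+1}\cdot\frac{(-1)^n+1}{4}. \end{align*} *)

theory Defs
  imports Complex_Main
begin

end

theory Submission
  imports Defs
begin

text \<open>
  Reciprocal binomial coefficients satisfy
  \<open>1 / C(m,j) = (m+1)/(m+2) * (1 / C(m+1,j) + 1 / C(m+1,j+1))\<close>.
  With \<open>A\<^sub>j = \<Sum>i\<le>j. C(m+1,i)\<close> and \<open>A\<^sub>j = A\<^sub>j\<^sub>-\<^sub>1 + C(m+1,j)\<close>, this makes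
  \<open>\<Sum>j\<le>k. (-1)\<^sup>j A\<^sub>j / C(m,j)\<close> telescope, leaving the alternating sum of signs and the
  boundary term \<open>(-1)\<^sup>k A\<^sub>k / C(m+1,k+1)\<close>. For \<open>k = m\<close> one has \<open>A\<^sub>m = 2\<^sup>m\<^sup>+\<^sup>1 - 1\<close>; for
  \<open>m = 2n\<close>, \<open>k = n\<close> the symmetry of row \<open>2n+1\<close> gives \<open>A\<^sub>n = 2\<^sup>2\<^sup>n\<close>.
\<close>

lemma inverse_binomial_pascal:
  assumes "j \<le> m"
  shows "1 / real (m choose j)
       = real (m+1) / real (m+2) * (1 / real ((m+1) choose j) + 1 / real ((m+1) choose (j+1)))"
proof -
  define c where "c = real (m choose j)"
  define l where "l = real ((m+1) choose j)"
  define u where "u = real ((m+1) choose (j+1))"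
  have pos: "c > 0" "l > 0" "u > 0"
    using assms by (simp_all add: c_def l_def u_def del: binomial_Suc_Suc)
  then have denom_pos: "real (m+1) * c > 0" by simp
  have "(m+1-j) * ((m+1) choose j) = (m+1) * (m choose j)"
    using binomial_absorb_comp[of "m+1" j] by simp
  then have "real (m+1-j) * l = real (m+1) * c"
    unfolding c_def l_def by (metis of_nat_mult)
  then have lower: "1 / l = (real m + 1 - real j) / (real (m+1) * c)"
    using assms pos denom_pos by (simp add: field_simps)
  have "real (j+1) * u = real (m+1) * c"
    unfolding c_def u_def using Suc_times_binomial[of j m] by (simp only: Suc_eq_plus1 flip: of_nat_mult)
  then have upper: "1 / u = (real j + 1) / (real (m+1) * c)"
    using pos denom_pos by (simp add: field_simps)
  have "1 / l + 1 / u = real (m+2) / (real (m+1) * c)"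
    unfolding lower upper by (simp add: add_divide_distrib[symmetric])
  then show ?thesis
    unfolding c_def[symmetric] l_def[symmetric] u_def[symmetric] using pos by simp
qed

lemma alternating_sum_partial_binomial_sums:
  assumes "k \<le> m"
  shows "(\<Sum>j=0..k. \<Sum>i=0..j. real ((m+1) choose i) / real (m choose j) * (-1)^j)
       = real (m+1) / real (m+2) * ((\<Sum>j=0..k. (-1)^j)
           + (-1)^k * (\<Sum>i=0..k. real ((m+1) choose i)) / real ((m+1) choose (k+1)))"
  using assms
proof (induction k)
  case 0
  show ?case by (simp add: divide_simps)
next
  case (Suc k)
  define p where "p = real (m+1) / real (m+2)"
  define A where "A = (\<Sum>i=0..k. real ((m+1) choose i))"
  define c where "c = real ((m+1) choose Suc k)"
  define d where "d = real ((m+1) choose (Suc k + 1))"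
  have pos: "c > 0" "d > 0"
    using Suc.prems by (simp_all add: c_def d_def del: binomial_Suc_Suc)
  have pascal: "1 / real (m choose Suc k) = p * (1 / c + 1 / d)"
    using inverse_binomial_pascal[OF Suc.prems] unfolding p_def c_def d_def .
  have new_row: "(\<Sum>i=0..Suc k. real ((m+1) choose i) / real (m choose Suc k) * (-1)^Suc k)
      = (-1)^Suc k * (A + c) * (p * (1 / c + 1 / d))"
  proof -
    have "(\<Sum>i=0..Suc k. real ((m+1) choose i) / real (m choose Suc k) * (-1)^Suc k)
        = (\<Sum>i=0..Suc k. real ((m+1) choose i)) / real (m choose Suc k) * (-1)^Suc k"
      by (simp only: sum_distrib_right sum_divide_distrib)
    also have "(\<Sum>i=0..Suc k. real ((m+1) choose i)) = A + c"
      by (simp add: A_def c_def)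
    finally show ?thesis
      unfolding pascal[symmetric] by simp
  qed
  have "(\<Sum>j=0..Suc k. \<Sum>i=0..j. real ((m+1) choose i) / real (m choose j) * (-1)^j)
      = p * ((\<Sum>j=0..k. (-1)^j) + (-1)^k * A / c) + (-1)^Suc k * (A + c) * (p * (1 / c + 1 / d))"
    using Suc new_row by (simp add: A_def c_def p_def)
  also have "\<dots> = p * ((\<Sum>j=0..Suc k. (-1)^j) + (-1)^Suc k * (A + c) / d)"
    using pos by (simp add: field_simps)
  finally show ?case
    by (simp add: A_def c_def d_def p_def)
qed

lemma sum_alternating_signs: "(\<Sum>j=0..k. (-1::real)^j) = (1 + (-1)^k) / 2"
  by (induction k) auto

lemma sum_lower_half_odd_binomial_row: "(\<Sum>i=0..n. real ((2*n+1) choose i)) = 2^(2*n)"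
proof -
  have "{0..2*n+1} = {0..n} \<union> {n+1..2*n+1}" by auto
  then have "(\<Sum>i=0..2*n+1. real ((2*n+1) choose i))
      = (\<Sum>i=0..n. real ((2*n+1) choose i)) + (\<Sum>i=n+1..2*n+1. real ((2*n+1) choose i))"
    by (simp add: sum.union_disjoint del: binomial_Suc_Suc)
  also have "(\<Sum>i=n+1..2*n+1. real ((2*n+1) choose i)) = (\<Sum>i=0..n. real ((2*n+1) choose i))"
    by (rule sum.reindex_bij_witness[where i="\<lambda>i. 2*n+1-i" and j="\<lambda>i. 2*n+1-i"])
      (auto simp: binomial_symmetric[symmetric])
  finally have "2 * (\<Sum>i=0..n. real ((2*n+1) choose i)) = (\<Sum>i=0..2*n+1. real ((2*n+1) choose i))"
    by simp
  also have "\<dots> = 2^(2*n+1)"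
    using choose_row_sum[of "2*n+1"] by (simp add: atMost_atLeast0 flip: of_nat_sum)
  finally show ?thesis by simp
qed

lemma alternating_binomial_ratio_sum:
  "(\<Sum>j=0..n. \<Sum>i=0..j. real ((n+1) choose i) / real (n choose j) * (-1)^j)
     = real (n+1) / real (2*n+4) * (1 + (-1)^n * (2^(n+2) - 1))"
proof -
  have "(\<Sum>i=0..n+1. real ((n+1) choose i)) = 2^(n+1)"
    using choose_row_sum[of "n+1"] by (simp add: atMost_atLeast0 flip: of_nat_sum)
  then have "(\<Sum>i=0..n. real ((n+1) choose i)) = 2^(n+1) - 1"
    by simp
  then have "(\<Sum>j=0..n. \<Sum>i=0..j. real ((n+1) choose i) / real (n choose j) * (-1)^j)
      = real (n+1) / real (n+2) * ((1 + (-1)^n) / 2 + (-1)^n * (2^(n+1) - 1))"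
    using alternating_sum_partial_binomial_sums[of n n] by (simp add: sum_alternating_signs)
  also have "\<dots> = real (n+1) / real (2*n+4) * (1 + (-1)^n * (2^(n+2) - 1))"
    by (simp add: field_simps)
  finally show ?thesis .
qed

lemma alternating_binomial_ratio_sum_even_row:
  "(\<Sum>j=0..n. \<Sum>i=0..j. real ((2*n+1) choose i) / real ((2*n) choose j) * (-1)^j)
     = (-1)^n * (2^(2*n) / 2) / real ((2*n) choose n)
       + real (2*n+1) / real (n+1) * (((-1)^n + 1) / 4)"
proof -
  define c where "c = real ((2*n) choose n)"
  have c_pos: "c > 0" by (simp add: c_def)
  have "real (n+1) * real ((2*n+1) choose (n+1)) = real (2*n+1) * c"
    unfolding c_def using Suc_times_binomial[of n "2*n"] by (simp only: Suc_eq_plus1 flip: of_nat_mult)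
  then have middle: "real ((2*n+1) choose (n+1)) = real (2*n+1) * c / real (n+1)"
    by (simp add: field_simps)
  have "(\<Sum>j=0..n. \<Sum>i=0..j. real ((2*n+1) choose i) / real ((2*n) choose j) * (-1)^j)
      = real (2*n+1) / real (2*n+2) * ((1 + (-1)^n) / 2 + (-1)^n * 2^(2*n) / real ((2*n+1) choose (n+1)))"
    using alternating_sum_partial_binomial_sums[of n "2*n", unfolded sum_lower_half_odd_binomial_row]
    by (simp add: sum_alternating_signs del: binomial_Suc_Suc)
  also have "\<dots> = (-1)^n * (2^(2*n) / 2) / c + real (2*n+1) / real (n+1) * (((-1)^n + 1) / 4)"
    unfolding middle using c_pos by (simp add: divide_simps) (simp add: algebra_simps)
  finally show ?thesis by (simp add: c_def)
qed

theorem mainTheorem13: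
  fixes n :: nat
  shows "((\<Sum>j=0..n. \<Sum>i=0..j. (real ((n+1) choose i) / real (n choose j)) * (-1)^j)
           = real (n+1) / real (2*n+4) * (1 + (-1)^n * (2^(n+2) - 1)))
    \<and> ((\<Sum>j=0..n. \<Sum>i=0..j. (real ((2*n+1) choose i) / real ((2*n) choose j)) * (-1)^j)
           = (-1)^n * (2^(2*n) / 2) / real ((2*n) choose n)
             + real (2*n+1) / real (n+1) * (((-1)^n + 1) / 4))"
  using alternating_binomial_ratio_sum alternating_binomial_ratio_sum_even_row by blast

end
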